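(* Let $\Gamma$ and $G$ be groups and let $H\le\Gamma\wr G$ be a subgroup such that $\mathrm{pr}(H)=G$ and such that, for some $1\neq g\in G$, $H\cap\Gamma^G$ surjects onto $\Gamma^{\{1,g\}}$ under the restriction map $f\mapsto f|_{\{1,g\}}$. Then for every subgroup $N$ with $[H,H]\le N\le\Gamma\wr G$, the group $N\cap\Gamma^G$ surjects onto $\Gamma^{\{1\}}$ under the restriction map $f\mapsto f|_{\{1\}}$.
   Context: The wreath product is $\Gamma\wr G=\Gamma^G\rtimes G$, where $\Gamma^G$ is the group (pointwise multiplication) of all functions $f\colon G\to\Gamma$, and $G$ acts from the right by $f^h(g)=f(hg)$ for $f\in\Gamma^G$, $g,h\in G$. $\mathrm{pr}\colon\Gamma\wr G\to G$, $(f,g)\mapsto g$, is the canonical projection. For $T\subseteq G$, $\Gamma^T$ denotes the functions $T\to\Gamma$. $[H,H]$ is the commutator subgroup. *)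

theory Defs
  imports "HOL-Algebra.Algebra" "HOL-Library.FuncSet"
begin

text \<open>An element \<open>(f, g)\<close> stands for the
  product \<open>f g\<close> with \<open>f \<in> \<Gamma>^G\<close> (extensional functions on the carrier of G) and
  \<open>g \<in> G\<close>. With the right action \<open>f^h(x) = f(h x)\<close> one has \<open>g f g^{-1} = f^{g^{-1}}\<close>,
  hence \<open>(f1,g1)(f2,g2) = (f1 * f2^{g1^{-1}}, g1 g2)\<close>.\<close>

definition wreath ::
  "('c, 'd) monoid_scheme \<Rightarrow> ('a, 'b) monoid_scheme \<Rightarrow> (('a \<Rightarrow> 'c) \<times> 'a) monoid" where
  "wreath \<Gamma> G =
    \<lparr> carrier = (carrier G \<rightarrow>\<^sub>E carrier \<Gamma>) \<times> carrier G,
      monoid.mult = (\<lambda>(f1, g1) (f2, g2).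
                ((\<lambda>x\<in>carrier G. f1 x \<otimes>\<^bsub>\<Gamma>\<^esub> f2 (inv\<^bsub>G\<^esub> g1 \<otimes>\<^bsub>G\<^esub> x)), g1 \<otimes>\<^bsub>G\<^esub> g2)),
      one = ((\<lambda>x\<in>carrier G. \<one>\<^bsub>\<Gamma>\<^esub>), \<one>\<^bsub>G\<^esub>) \<rparr>"

definition wr_pr :: "('a \<Rightarrow> 'c) \<times> 'a \<Rightarrow> 'a" where
  "wr_pr x = snd x"

definition wr_base ::
  "('c, 'd) monoid_scheme \<Rightarrow> ('a, 'b) monoid_scheme \<Rightarrow> (('a \<Rightarrow> 'c) \<times> 'a) set" where
  "wr_base \<Gamma> G = {(f, \<one>\<^bsub>G\<^esub>) | f. f \<in> carrier G \<rightarrow>\<^sub>E carrier \<Gamma>}"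

definition wr_restr :: "'a set \<Rightarrow> ('a \<Rightarrow> 'c) \<times> 'a \<Rightarrow> ('a \<Rightarrow> 'c)" where
  "wr_restr T x = restrict (fst x) T"

end

theory Submission
  imports Defs
begin

text \<open>Choose \<open>h = (k, g\<inverse>) \<in> H\<close> and \<open>a = (f, 1) \<in> H \<inter> \<Gamma>^G\<close> with \<open>f(1) = 1\<close>. The commutator
  \<open>[h, a]\<close> lies in \<open>N \<inter> \<Gamma>^G\<close>, and its value at \<open>1\<close> is \<open>k(1) f(g) k(1)\<inverse>\<close>; since \<open>f(g)\<close> may
  be prescribed freely, this value runs through all of \<open>\<Gamma>\<close>.\<close>

lemma wreath_carrier: "carrier (wreath \<Gamma> G) = (carrier G \<rightarrow>\<^sub>E carrier \<Gamma>) \<times> carrier G"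
  by (simp add: wreath_def)

lemma wreath_mult:
  "(f1, g1) \<otimes>\<^bsub>wreath \<Gamma> G\<^esub> (f2, g2) =
     ((\<lambda>x\<in>carrier G. f1 x \<otimes>\<^bsub>\<Gamma>\<^esub> f2 (inv\<^bsub>G\<^esub> g1 \<otimes>\<^bsub>G\<^esub> x)), g1 \<otimes>\<^bsub>G\<^esub> g2)"
  by (simp add: wreath_def)

lemma wreath_one: "\<one>\<^bsub>wreath \<Gamma> G\<^esub> = ((\<lambda>x\<in>carrier G. \<one>\<^bsub>\<Gamma>\<^esub>), \<one>\<^bsub>G\<^esub>)"
  by (simp add: wreath_def)

lemma group_wreath:
  assumes "group \<Gamma>" and "group G"
  shows "group (wreath \<Gamma> G)"
proof (rule groupI)
  interpret \<Gamma>: group \<Gamma> by fact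
  interpret G: group G by fact
  show "\<one>\<^bsub>wreath \<Gamma> G\<^esub> \<in> carrier (wreath \<Gamma> G)"
    by (auto simp: wreath_carrier wreath_one)
  fix x y z
  assume x: "x \<in> carrier (wreath \<Gamma> G)" and y: "y \<in> carrier (wreath \<Gamma> G)"
    and z: "z \<in> carrier (wreath \<Gamma> G)"
  obtain f1 g1 f2 g2 f3 g3 where xyz: "x = (f1, g1)" "y = (f2, g2)" "z = (f3, g3)"
    by (cases x, cases y, cases z)
  show "x \<otimes>\<^bsub>wreath \<Gamma> G\<^esub> y \<in> carrier (wreath \<Gamma> G)"
    using x y by (auto simp: xyz wreath_carrier wreath_mult PiE_iff)
  show "\<one>\<^bsub>wreath \<Gamma> G\<^esub> \<otimes>\<^bsub>wreath \<Gamma> G\<^esub> x = x"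
    using x by (auto simp: xyz wreath_carrier wreath_mult wreath_one PiE_iff
        extensional_def intro!: ext)
  show "x \<otimes>\<^bsub>wreath \<Gamma> G\<^esub> y \<otimes>\<^bsub>wreath \<Gamma> G\<^esub> z = x \<otimes>\<^bsub>wreath \<Gamma> G\<^esub> (y \<otimes>\<^bsub>wreath \<Gamma> G\<^esub> z)"
    using x y z by (auto simp: xyz wreath_carrier wreath_mult PiE_iff \<Gamma>.m_assoc G.m_assoc
        G.inv_mult_group intro!: ext)
  show "\<exists>y\<in>carrier (wreath \<Gamma> G). y \<otimes>\<^bsub>wreath \<Gamma> G\<^esub> x = \<one>\<^bsub>wreath \<Gamma> G\<^esub>"
  proof
    show "(\<lambda>t\<in>carrier G. inv\<^bsub>\<Gamma>\<^esub> f1 (g1 \<otimes>\<^bsub>G\<^esub> t), inv\<^bsub>G\<^esub> g1) \<otimes>\<^bsub>wreath \<Gamma> G\<^esub> x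
        = \<one>\<^bsub>wreath \<Gamma> G\<^esub>"
      using x by (auto simp: xyz wreath_carrier wreath_mult wreath_one PiE_iff intro!: ext)
  qed (use x in \<open>auto simp: xyz wreath_carrier PiE_iff\<close>)
qed

lemma wreath_inv:
  assumes "group \<Gamma>" and "group G"
    and "f \<in> carrier G \<rightarrow>\<^sub>E carrier \<Gamma>" and "s \<in> carrier G"
  shows "inv\<^bsub>wreath \<Gamma> G\<^esub> (f, s) = ((\<lambda>t\<in>carrier G. inv\<^bsub>\<Gamma>\<^esub> f (s \<otimes>\<^bsub>G\<^esub> t)), inv\<^bsub>G\<^esub> s)"
proof -
  interpret \<Gamma>: group \<Gamma> by fact
  interpret G: group G by fact
  interpret W: group "wreath \<Gamma> G" using group_wreath[OF assms(1,2)] .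
  show ?thesis
    by (rule W.inv_equality)
      (use assms(3,4) in \<open>auto simp: wreath_carrier wreath_mult wreath_one PiE_iff intro!: ext\<close>)
qed

lemma wreath_commutator_base:
  assumes "group \<Gamma>" and "group G"
    and k: "k \<in> carrier G \<rightarrow>\<^sub>E carrier \<Gamma>" and s: "s \<in> carrier G"
    and f: "f \<in> carrier G \<rightarrow>\<^sub>E carrier \<Gamma>"
  shows "(k, s) \<otimes>\<^bsub>wreath \<Gamma> G\<^esub> (f, \<one>\<^bsub>G\<^esub>) \<otimes>\<^bsub>wreath \<Gamma> G\<^esub> inv\<^bsub>wreath \<Gamma> G\<^esub> (k, s)
           \<otimes>\<^bsub>wreath \<Gamma> G\<^esub> inv\<^bsub>wreath \<Gamma> G\<^esub> (f, \<one>\<^bsub>G\<^esub>)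
         = ((\<lambda>x\<in>carrier G. k x \<otimes>\<^bsub>\<Gamma>\<^esub> f (inv\<^bsub>G\<^esub> s \<otimes>\<^bsub>G\<^esub> x) \<otimes>\<^bsub>\<Gamma>\<^esub> inv\<^bsub>\<Gamma>\<^esub> k x \<otimes>\<^bsub>\<Gamma>\<^esub> inv\<^bsub>\<Gamma>\<^esub> f x),
            \<one>\<^bsub>G\<^esub>)"
proof -
  interpret G: group G by fact
  show ?thesis
    using k s f
    by (auto simp: wreath_mult wreath_inv[OF assms(1,2)] PiE_iff G.m_assoc[symmetric] intro!: ext)
qed

lemma commutator_in_derived:
  "x \<in> H \<Longrightarrow> y \<in> H \<Longrightarrow> x \<otimes>\<^bsub>G\<^esub> y \<otimes>\<^bsub>G\<^esub> inv\<^bsub>G\<^esub> x \<otimes>\<^bsub>G\<^esub> inv\<^bsub>G\<^esub> y \<in> derived G H"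
  unfolding derived_def by (rule generate.incl) blast

lemma wr_restr_base_subset:
  "T \<subseteq> carrier G \<Longrightarrow> wr_restr T ` (K \<inter> wr_base \<Gamma> G) \<subseteq> T \<rightarrow>\<^sub>E carrier \<Gamma>"
  by (auto simp: wr_restr_def wr_base_def)

lemma wr_restr_singleton_eqI:
  "\<phi> \<in> {a} \<rightarrow>\<^sub>E A \<Longrightarrow> fst x a = \<phi> a \<Longrightarrow> wr_restr {a} x = \<phi>"
  by (auto simp: wr_restr_def PiE_iff extensional_def intro!: ext)

lemma derived_base_values_at_one:
  assumes "group \<Gamma>" and "group G"
    and H: "H \<subseteq> carrier (wreath \<Gamma> G)"
    and g: "g \<in> carrier G" "g \<noteq> \<one>\<^bsub>G\<^esub>" "inv\<^bsub>G\<^esub> g \<in> wr_pr ` H"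
    and restr_onto: "wr_restr {\<one>\<^bsub>G\<^esub>, g} ` (H \<inter> wr_base \<Gamma> G) = ({\<one>\<^bsub>G\<^esub>, g} \<rightarrow>\<^sub>E carrier \<Gamma>)"
    and \<gamma>: "\<gamma> \<in> carrier \<Gamma>"
  shows "\<exists>c \<in> derived (wreath \<Gamma> G) H \<inter> wr_base \<Gamma> G. fst c \<one>\<^bsub>G\<^esub> = \<gamma>"
proof -
  interpret \<Gamma>: group \<Gamma> by fact
  interpret G: group G by fact
  obtain k where hH: "(k, inv\<^bsub>G\<^esub> g) \<in> H"
    using g(3) by (auto simp: wr_pr_def)
  have k: "k \<in> carrier G \<rightarrow>\<^sub>E carrier \<Gamma>"
    using hH H by (auto simp: wreath_carrier)
  have k1: "k \<one>\<^bsub>G\<^esub> \<in> carrier \<Gamma>"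
    using k by auto
  define \<delta> where "\<delta> = inv\<^bsub>\<Gamma>\<^esub> k \<one>\<^bsub>G\<^esub> \<otimes>\<^bsub>\<Gamma>\<^esub> \<gamma> \<otimes>\<^bsub>\<Gamma>\<^esub> k \<one>\<^bsub>G\<^esub>"
  have \<delta>: "\<delta> \<in> carrier \<Gamma>"
    using k1 \<gamma> by (simp add: \<delta>_def)
  have "(\<lambda>x\<in>{\<one>\<^bsub>G\<^esub>, g}. if x = \<one>\<^bsub>G\<^esub> then \<one>\<^bsub>\<Gamma>\<^esub> else \<delta>) \<in> {\<one>\<^bsub>G\<^esub>, g} \<rightarrow>\<^sub>E carrier \<Gamma>"
    using \<delta> by auto
  then obtain f where aH: "(f, \<one>\<^bsub>G\<^esub>) \<in> H" and f: "f \<in> carrier G \<rightarrow>\<^sub>E carrier \<Gamma>"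
    and f_restr: "restrict f {\<one>\<^bsub>G\<^esub>, g} = (\<lambda>x\<in>{\<one>\<^bsub>G\<^esub>, g}. if x = \<one>\<^bsub>G\<^esub> then \<one>\<^bsub>\<Gamma>\<^esub> else \<delta>)"
    unfolding restr_onto[symmetric] by (auto simp: wr_base_def wr_restr_def)
  have f1: "f \<one>\<^bsub>G\<^esub> = \<one>\<^bsub>\<Gamma>\<^esub>" and fg: "f g = \<delta>"
    using fun_cong[OF f_restr, of "\<one>\<^bsub>G\<^esub>"] fun_cong[OF f_restr, of g] g(2) by auto
  define c where "c = (k, inv\<^bsub>G\<^esub> g) \<otimes>\<^bsub>wreath \<Gamma> G\<^esub> (f, \<one>\<^bsub>G\<^esub>)
    \<otimes>\<^bsub>wreath \<Gamma> G\<^esub> inv\<^bsub>wreath \<Gamma> G\<^esub> (k, inv\<^bsub>G\<^esub> g) \<otimes>\<^bsub>wreath \<Gamma> G\<^esub> inv\<^bsub>wreath \<Gamma> G\<^esub> (f, \<one>\<^bsub>G\<^esub>)"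
  have c: "c = ((\<lambda>x\<in>carrier G. k x \<otimes>\<^bsub>\<Gamma>\<^esub> f (g \<otimes>\<^bsub>G\<^esub> x) \<otimes>\<^bsub>\<Gamma>\<^esub> inv\<^bsub>\<Gamma>\<^esub> k x \<otimes>\<^bsub>\<Gamma>\<^esub> inv\<^bsub>\<Gamma>\<^esub> f x),
      \<one>\<^bsub>G\<^esub>)"
    unfolding c_def using wreath_commutator_base[OF assms(1,2) k _ f] g(1) by simp
  have conj_\<delta>: "k \<one>\<^bsub>G\<^esub> \<otimes>\<^bsub>\<Gamma>\<^esub> \<delta> \<otimes>\<^bsub>\<Gamma>\<^esub> inv\<^bsub>\<Gamma>\<^esub> k \<one>\<^bsub>G\<^esub> = \<gamma>"
    using k1 \<gamma> by (simp add: \<delta>_def \<Gamma>.m_assoc flip: \<Gamma>.m_assoc[of "k \<one>\<^bsub>G\<^esub>"])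
  have "c \<in> derived (wreath \<Gamma> G) H"
    unfolding c_def using hH aH by (rule commutator_in_derived)
  moreover have "c \<in> wr_base \<Gamma> G"
    using k f g(1) by (auto simp: c wr_base_def PiE_iff)
  moreover have "fst c \<one>\<^bsub>G\<^esub> = \<gamma>"
    using k1 g(1) \<gamma> conj_\<delta> by (simp add: c f1 fg)
  ultimately show ?thesis by blast
qed

theorem lemma4p11:
  fixes \<Gamma> :: "('c, 'd) monoid_scheme" and G :: "('a, 'b) monoid_scheme"
  assumes "group \<Gamma>" and "group G"
    and "subgroup H (wreath \<Gamma> G)"
    and "wr_pr ` H = carrier G"
    and "g \<in> carrier G" and "g \<noteq> \<one>\<^bsub>G\<^esub>"
    and "wr_restr {\<one>\<^bsub>G\<^esub>, g} ` (H \<inter> wr_base \<Gamma> G) = ({\<one>\<^bsub>G\<^esub>, g} \<rightarrow>\<^sub>E carrier \<Gamma>)"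
    and "subgroup N (wreath \<Gamma> G)"
    and "derived (wreath \<Gamma> G) H \<subseteq> N"
  shows "wr_restr {\<one>\<^bsub>G\<^esub>} ` (N \<inter> wr_base \<Gamma> G) = ({\<one>\<^bsub>G\<^esub>} \<rightarrow>\<^sub>E carrier \<Gamma>)"
proof
  interpret G: group G by fact
  show "wr_restr {\<one>\<^bsub>G\<^esub>} ` (N \<inter> wr_base \<Gamma> G) \<subseteq> {\<one>\<^bsub>G\<^esub>} \<rightarrow>\<^sub>E carrier \<Gamma>"
    by (rule wr_restr_base_subset) simp
  show "{\<one>\<^bsub>G\<^esub>} \<rightarrow>\<^sub>E carrier \<Gamma> \<subseteq> wr_restr {\<one>\<^bsub>G\<^esub>} ` (N \<inter> wr_base \<Gamma> G)"
  proof
    fix \<phi> assume \<phi>: "\<phi> \<in> {\<one>\<^bsub>G\<^esub>} \<rightarrow>\<^sub>E carrier \<Gamma>"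
    obtain c where "c \<in> derived (wreath \<Gamma> G) H \<inter> wr_base \<Gamma> G" and "fst c \<one>\<^bsub>G\<^esub> = \<phi> \<one>\<^bsub>G\<^esub>"
      using derived_base_values_at_one[OF assms(1,2) subgroup.subset[OF assms(3)] assms(5,6) _ assms(7)]
        assms(4,5) \<phi> by fastforce
    then show "\<phi> \<in> wr_restr {\<one>\<^bsub>G\<^esub>} ` (N \<inter> wr_base \<Gamma> G)"
      using wr_restr_singleton_eqI[OF \<phi>] assms(9) by blast
  qed
qed

end
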